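(* Fix $\varepsilon>0$ and $R>1$. There is a constant $\lambda_0$ depending only on $\varepsilon$ and $R$, with $\lambda_0=\mathcal{O}(\varepsilon^{-1})$ for fixed $R$, such that for every $\lambda\ge\lambda_0$, every finite nonempty $V\subset\mathbb{R}^d$ and every hierarchy $(\mathcal{T},R)$ on $V$ satisfying the separation property, the initial spanner $\mathcal{S}_0$ (with parameter $\lambda$), viewed as a graph on $V$, is a $(1+\varepsilon)$-spanner of $V$: for all $p,q\in V$ the shortest-path distance in $\mathcal{S}_0$ between $p$ and $q$ is at most $(1+\varepsilon)\lVert pq\rVert$.
   Context: $\lVert xy\rVert$ and $d(x,y)$ denote Euclidean distance. Hierarchy: given $R>1$ and a finite $V\subset\mathbb{R}^d$, a hierarchy $(\mathcal{T},R)$ is a finite rooted tree $\mathcal{T}$ whose nodes, called explicit clusters, are distinct pairs $(p,l)$ with center $p\in V$ and level $l\in\mathbb{Z}$; a cluster $(p,l)$ covers the ball of radius $R^l$ around $p$; every non-root cluster $(p,l)$ has a parent of level $l+1$ whose center $q$ satisfies $d(p,q)\le R^{l+1}$; every point of $V$ is the center of at least one explicit cluster. For every explicit cluster $(p,l)$ and every integer $l'<l$, the pair $(p,l')$ is an implicit cluster; the clusters of the hierarchy are the explicit and implicit ones. Separation property: for any two clusters $(p,l),(q,l)$ of the same level with $p\neq q$, $d(p,q)>R^l$. Initial spanner $\mathcal{S}_0$ with parameter $\lambda>0$: the graph whose vertices are the clusters, with a type I edge between any two clusters $(p,l),(q,l)$ of the same level with $p\ne q$ and $d(p,q)\le\lambda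 R^l$, and a type II edge between every explicit cluster and each of its children in $\mathcal{T}$. As a graph on $V$, $\mathcal{S}_0$ has an edge $\{p,q\}$ of weight $\lVert pq\rVert$ whenever some edge of $\mathcal{S}_0$ joins a cluster centered at $p$ to a cluster centered at $q\ne p$. *)

theory Defs
  imports "HOL-Analysis.Analysis" "HOL-Library.Landau_Symbols"
begin

text \<open>Points of R^d are represented as functions nat => real vanishing at all
  indices >= d, so that the dimension d can be quantified inside the statement.
  The Euclidean distance in R^d:\<close>

definition in_Rd :: "nat \<Rightarrow> (nat \<Rightarrow> real) \<Rightarrow> bool" where
  "in_Rd d x \<longleftrightarrow> (\<forall>i\<ge>d. x i = 0)"

definition eucl_dist :: "nat \<Rightarrow> (nat \<Rightarrow> real) \<Rightarrow> (nat \<Rightarrow> real) \<Rightarrow> real" where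
  "eucl_dist d x y = sqrt (\<Sum>i<d. (x i - y i)^2)"

text \<open>A hierarchy on V with parameter R, given by its set C of explicit clusters
  (pairs (center, level)), its root r, and the parent map par (meaningful on
  C - {r}). Since levels strictly increase along parent links and C is finite,
  this is exactly a finite rooted tree on C.\<close>

definition hierarchy ::
  "('a \<Rightarrow> 'a \<Rightarrow> real) \<Rightarrow> real \<Rightarrow> 'a set \<Rightarrow> ('a \<times> int) set \<Rightarrow> ('a \<times> int)
     \<Rightarrow> (('a \<times> int) \<Rightarrow> ('a \<times> int)) \<Rightarrow> bool" where
  "hierarchy \<delta> R V C r par \<longleftrightarrow>
     finite C \<and> r \<in> C \<and> fst ` C = V \<and>
     (\<forall>c \<in> C - {r}. par c \<in> C \<and> snd (par c) = snd c + 1 \<and>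
                     \<delta> (fst c) (fst (par c)) \<le> R powi (snd c + 1))"

definition is_cluster :: "('a \<times> int) set \<Rightarrow> ('a \<times> int) \<Rightarrow> bool" where
  "is_cluster C c \<longleftrightarrow> (\<exists>l'. (fst c, l') \<in> C \<and> snd c \<le> l')"

definition separation ::
  "('a \<Rightarrow> 'a \<Rightarrow> real) \<Rightarrow> real \<Rightarrow> ('a \<times> int) set \<Rightarrow> bool" where
  "separation \<delta> R C \<longleftrightarrow>
     (\<forall>p q l. is_cluster C (p, l) \<and> is_cluster C (q, l) \<and> p \<noteq> q \<longrightarrow> \<delta> p q > R powi l)"

definition S0_edge ::
  "('a \<Rightarrow> 'a \<Rightarrow> real) \<Rightarrow> real \<Rightarrow> real \<Rightarrow> ('a \<times> int) set \<Rightarrow> ('a \<times> int)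
     \<Rightarrow> (('a \<times> int) \<Rightarrow> ('a \<times> int)) \<Rightarrow> 'a \<Rightarrow> 'a \<Rightarrow> bool" where
  "S0_edge \<delta> R lam C r par p q \<longleftrightarrow> p \<noteq> q \<and>
     ((\<exists>l. is_cluster C (p, l) \<and> is_cluster C (q, l) \<and> \<delta> p q \<le> lam * R powi l) \<or>
      (\<exists>c \<in> C - {r}. (fst c = p \<and> fst (par c) = q) \<or> (fst c = q \<and> fst (par c) = p)))"

text \<open>Walks and shortest-path distance (infinite if no walk exists).\<close>
definition is_walk :: "('a \<Rightarrow> 'a \<Rightarrow> bool) \<Rightarrow> 'a \<Rightarrow> 'a \<Rightarrow> 'a list \<Rightarrow> bool" where
  "is_walk E p q xs \<longleftrightarrow> xs \<noteq> [] \<and> hd xs = p \<and> last xs = q \<and>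
     (\<forall>i. Suc i < length xs \<longrightarrow> E (xs ! i) (xs ! Suc i))"

definition walk_weight :: "('a \<Rightarrow> 'a \<Rightarrow> real) \<Rightarrow> 'a list \<Rightarrow> real" where
  "walk_weight \<delta> xs = (\<Sum>i < length xs - 1. \<delta> (xs ! i) (xs ! Suc i))"

definition sp_dist ::
  "('a \<Rightarrow> 'a \<Rightarrow> real) \<Rightarrow> ('a \<Rightarrow> 'a \<Rightarrow> bool) \<Rightarrow> 'a \<Rightarrow> 'a \<Rightarrow> ereal" where
  "sp_dist \<delta> E p q = Inf {ereal (walk_weight \<delta> xs) | xs. is_walk E p q xs}"

end

theory Submission
  imports Defs
begin

text \<open>Climbing from a point to its ancestor of level l along parent edges costs at most
  R^l + R^(l-1) + ... \<le> \<alpha> R^l with \<alpha> = R/(R-1). Let l be the least level at which the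
  ancestors a, b of p and q are close enough for a type I edge, \<delta>(a,b) \<le> \<lambda> R^l. The walk
  p \<rightarrow> a \<rightarrow> b \<rightarrow> q has length at most \<delta>(p,q) + 4\<alpha> R^l by the triangle inequality, while
  the failure at level l - 1 gives \<delta>(p,q) > (\<lambda> - 2\<alpha>) R^(l-1). So the detour is at most
  \<epsilon> \<delta>(p,q) once \<lambda> \<ge> 2\<alpha> + 4\<alpha>R/\<epsilon>. Separation is used only to make \<delta>(p,q) > 0 for
  distinct centers, which is what makes such a least level exist.\<close>

inductive weighted_walk :: "('a \<Rightarrow> 'a \<Rightarrow> bool) \<Rightarrow> ('a \<Rightarrow> 'a \<Rightarrow> real) \<Rightarrow> 'a \<Rightarrow> 'a \<Rightarrow> real \<Rightarrow> bool"
  for E \<delta> where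
  weighted_walk_refl: "weighted_walk E \<delta> p p 0"
| weighted_walk_step: "E p q \<Longrightarrow> weighted_walk E \<delta> q s w \<Longrightarrow> weighted_walk E \<delta> p s (\<delta> p q + w)"

lemma weighted_walk_imp_is_walk:
  "weighted_walk E \<delta> p q w \<Longrightarrow> \<exists>xs. is_walk E p q xs \<and> walk_weight \<delta> xs = w"
proof (induction rule: weighted_walk.induct)
  case (weighted_walk_refl p)
  show ?case by (rule exI[of _ "[p]"]) (simp add: is_walk_def walk_weight_def)
next
  case (weighted_walk_step p q s w)
  then obtain xs where xs: "is_walk E q s xs" "walk_weight \<delta> xs = w" by blast
  then obtain m where m: "length xs = Suc m" unfolding is_walk_def by (cases xs) auto
  have hd: "xs ! 0 = q" using xs(1) unfolding is_walk_def by (cases xs) auto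
  have "is_walk E p s (p # xs)"
    unfolding is_walk_def
  proof (intro conjI allI impI)
    show "last (p # xs) = s" using xs(1) unfolding is_walk_def by auto
  next
    fix i assume "Suc i < length (p # xs)"
    then show "E ((p # xs) ! i) ((p # xs) ! Suc i)"
      using xs(1) hd weighted_walk_step(1) unfolding is_walk_def by (cases i) auto
  qed auto
  moreover have "walk_weight \<delta> (p # xs) = \<delta> p q + w"
    unfolding walk_weight_def using hd xs(2)
    by (simp only: length_Cons m diff_Suc_1 sum.lessThan_Suc_shift) (simp add: walk_weight_def m)
  ultimately show ?case by blast
qed

lemma sp_dist_le_weighted_walk: "weighted_walk E \<delta> p q w \<Longrightarrow> sp_dist \<delta> E p q \<le> ereal w"
  unfolding sp_dist_def using weighted_walk_imp_is_walk[of E \<delta> p q w]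
  by (force intro: Inf_lower)

lemma weighted_walk_edge: "E p q \<Longrightarrow> weighted_walk E \<delta> p q (\<delta> p q)"
  using weighted_walk_step[OF _ weighted_walk_refl] by fastforce

lemma weighted_walk_trans:
  "weighted_walk E \<delta> p q w1 \<Longrightarrow> weighted_walk E \<delta> q s w2 \<Longrightarrow> weighted_walk E \<delta> p s (w1 + w2)"
proof (induction rule: weighted_walk.induct)
  case (weighted_walk_refl p)
  then show ?case by simp
next
  case (weighted_walk_step p q s' w)
  then show ?case using weighted_walk.weighted_walk_step[of E p q \<delta> s "w + w2"]
    by (simp add: add.assoc)
qed

lemma weighted_walk_sym:
  assumes "\<And>x y. E x y \<Longrightarrow> E y x" and "\<And>x y. \<delta> x y = \<delta> y x"
  shows "weighted_walk E \<delta> p q w \<Longrightarrow> weighted_walk E \<delta> q p w"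
proof (induction rule: weighted_walk.induct)
  case (weighted_walk_refl p)
  then show ?case by (rule weighted_walk.weighted_walk_refl)
next
  case (weighted_walk_step p q s w)
  have "weighted_walk E \<delta> s p (w + \<delta> q p)"
    using weighted_walk_trans[OF weighted_walk_step(3) weighted_walk_edge[of E q p]]
      assms(1) weighted_walk_step(1) by blast
  then show ?case using assms(2)[of q p] by (simp add: add.commute)
qed

lemma weighted_walk_dist_le:
  assumes "\<And>x. \<delta> x x = 0" and "\<And>x y z. \<delta> x z \<le> \<delta> x y + \<delta> y z"
  shows "weighted_walk E \<delta> p q w \<Longrightarrow> \<delta> p q \<le> w"
proof (induction rule: weighted_walk.induct)
  case (weighted_walk_refl p)
  then show ?case using assms(1) by simp
next
  case (weighted_walk_step p q s w)
  then show ?case using assms(2)[of p s q] by linarith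
qed

lemma int_exists_false_true_step:
  fixes m k :: int
  assumes "m \<le> k" and "\<not> P m" and "P k"
  shows "\<exists>l. l \<le> k \<and> P l \<and> \<not> P (l - 1)"
  using assms
proof (induction k rule: int_ge_induct)
  case base
  then show ?case by simp
next
  case (step i)
  show ?case
  proof (cases "P i")
    case True
    then obtain l where "l \<le> i" "P l" "\<not> P (l - 1)" using step by blast
    then show ?thesis by (intro exI[of _ l]) simp
  next
    case False
    then show ?thesis using step.prems by (intro exI[of _ "i + 1"]) simp
  qed
qed

lemma bigo_const_plus_inverse: "(\<lambda>\<epsilon>::real. a + b / \<epsilon>) \<in> O[at_right 0](\<lambda>\<epsilon>. 1 / \<epsilon>)"
proof (rule sum_in_bigo)
  have "(\<lambda>_. 1) \<in> o[at_right 0](\<lambda>\<epsilon>::real. 1 / \<epsilon>)"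
  proof (rule smalloI_tendsto)
    show "((\<lambda>\<epsilon>::real. 1 / (1 / \<epsilon>)) \<longlongrightarrow> 0) (at_right 0)"
      by simp
    show "\<forall>\<^sub>F \<epsilon> in at_right (0::real). 1 / \<epsilon> \<noteq> 0"
      using eventually_at_right_less[of 0] by (auto elim: eventually_mono)
  qed
  then show "(\<lambda>\<epsilon>::real. a) \<in> O[at_right 0](\<lambda>\<epsilon>. 1 / \<epsilon>)"
    using bigo_const landau_o.big_trans landau_o.small_imp_big by blast
  show "(\<lambda>\<epsilon>::real. b / \<epsilon>) \<in> O[at_right 0](\<lambda>\<epsilon>. 1 / \<epsilon>)"
    using cmult_in_bigo_iff[of b "\<lambda>\<epsilon>::real. 1 / \<epsilon>"] by simp
qed

locale metric_hierarchy =
  fixes \<delta> :: "'a \<Rightarrow> 'a \<Rightarrow> real" and R lam :: real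
    and V :: "'a set" and C :: "('a \<times> int) set" and r :: "'a \<times> int"
    and par :: "'a \<times> int \<Rightarrow> 'a \<times> int"
  assumes hierarchy: "hierarchy \<delta> R V C r par"
    and R_gt_1: "R > 1"
    and dist_self: "\<delta> x x = 0"
    and dist_commute: "\<delta> x y = \<delta> y x"
    and dist_triangle: "\<delta> x z \<le> \<delta> x y + \<delta> y z"
begin

abbreviation S0 :: "'a \<Rightarrow> 'a \<Rightarrow> bool" where
  "S0 \<equiv> S0_edge \<delta> R lam C r par"

definition \<alpha> :: real where
  "\<alpha> = R / (R - 1)"

lemma \<alpha>_pos: "\<alpha> > 0"
  unfolding \<alpha>_def using R_gt_1 by simp

lemma \<alpha>_geometric: "\<alpha> * R powi l + R powi (l + 1) = \<alpha> * R powi (l + 1)"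
proof -
  have "R powi (l + 1) = R powi l * R" using R_gt_1 by (simp add: power_int_add_1)
  then show ?thesis using R_gt_1 unfolding \<alpha>_def by (simp add: field_simps)
qed

lemma dist_via: "\<delta> p q \<le> \<delta> p a + \<delta> a b + \<delta> b q"
  using dist_triangle[of p q a] dist_triangle[of a q b] by simp

lemma S0_sym: "S0 x y \<Longrightarrow> S0 y x"
  unfolding S0_edge_def using dist_commute by metis

lemma weighted_walk_S0_sym: "weighted_walk S0 \<delta> p q w \<Longrightarrow> weighted_walk S0 \<delta> q p w"
  using weighted_walk_sym[OF S0_sym dist_commute] .

lemma weighted_walk_S0_dist_le: "weighted_walk S0 \<delta> p q w \<Longrightarrow> \<delta> p q \<le> w"
  using weighted_walk_dist_le[OF dist_self dist_triangle] .

lemma center_has_cluster: "p \<in> V \<Longrightarrow> \<exists>L. (p, L) \<in> C"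
  using hierarchy unfolding hierarchy_def by force

lemma parent_cluster:
  "c \<in> C - {r} \<Longrightarrow> par c \<in> C \<and> snd (par c) = snd c + 1 \<and> \<delta> (fst c) (fst (par c)) \<le> R powi (snd c + 1)"
  using hierarchy unfolding hierarchy_def by blast

lemma root_level_max: "c \<in> C \<Longrightarrow> snd c \<le> snd r"
  and root_level_unique: "c \<in> C \<Longrightarrow> snd c = snd r \<Longrightarrow> c = r"
proof -
  have fin: "finite C" and rC: "r \<in> C" using hierarchy unfolding hierarchy_def by auto
  define M where "M = Max (snd ` C)"
  have le: "snd c \<le> M" if "c \<in> C" for c unfolding M_def using fin that by auto
  have top: "c = r" if "c \<in> C" "snd c = M" for c
  proof (rule ccontr)
    assume "c \<noteq> r"
    then have "par c \<in> C" "snd (par c) = M + 1" using parent_cluster that by auto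
    then show False using le by fastforce
  qed
  have "snd r = M"
    using Max_in[of "snd ` C"] fin rC top unfolding M_def by fastforce
  then show "c \<in> C \<Longrightarrow> snd c \<le> snd r" "c \<in> C \<Longrightarrow> snd c = snd r \<Longrightarrow> c = r"
    using le top by auto
qed

lemma is_cluster_root_level: "is_cluster C (a, snd r) \<Longrightarrow> a = fst r"
  unfolding is_cluster_def using root_level_max root_level_unique by force

lemma weighted_walk_S0_or_eq: "a = b \<or> S0 a b \<Longrightarrow> weighted_walk S0 \<delta> a b (\<delta> a b)"
  using weighted_walk_refl[of S0 \<delta> a] weighted_walk_edge dist_self by auto

lemma type_I_walk:
  assumes "is_cluster C (a, l)" "is_cluster C (b, l)" "\<delta> a b \<le> lam * R powi l"
  shows "weighted_walk S0 \<delta> a b (\<delta> a b)"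
  using assms by (intro weighted_walk_S0_or_eq) (auto simp: S0_edge_def)

lemma climb_one_level:
  assumes a: "is_cluster C (a, l)" and l: "l < snd r"
  shows "\<exists>b w. is_cluster C (b, l + 1) \<and> weighted_walk S0 \<delta> a b w \<and> w \<le> R powi (l + 1)"
proof -
  obtain l' where l': "(a, l') \<in> C" "l \<le> l'" using a unfolding is_cluster_def by auto
  show ?thesis
  proof (cases "l + 1 \<le> l'")
    case True
    then show ?thesis using l' R_gt_1 weighted_walk_refl unfolding is_cluster_def by fastforce
  next
    case False
    with l' have "l' = l" by simp
    with l' l have c: "(a, l) \<in> C - {r}" by auto
    define b where "b = fst (par (a, l))"
    have b: "(b, l + 1) \<in> C" "\<delta> a b \<le> R powi (l + 1)"
      using parent_cluster[OF c] unfolding b_def by (metis fst_conv snd_conv prod.collapse)+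
    have "a = b \<or> S0 a b" unfolding S0_edge_def b_def using c by (metis fst_conv)
    then have "weighted_walk S0 \<delta> a b (\<delta> a b)" by (rule weighted_walk_S0_or_eq)
    then show ?thesis using b unfolding is_cluster_def by fastforce
  qed
qed

lemma ancestor_walk:
  assumes p: "(p, L) \<in> C" and l: "l \<le> snd r"
  shows "\<exists>a w. is_cluster C (a, l) \<and> weighted_walk S0 \<delta> p a w \<and> w \<le> \<alpha> * R powi l"
proof -
  have below: "\<exists>a w. is_cluster C (a, i) \<and> weighted_walk S0 \<delta> p a w \<and> w \<le> \<alpha> * R powi i"
    if "i \<le> L" for i
    using that p \<alpha>_pos R_gt_1 weighted_walk_refl unfolding is_cluster_def by fastforce
  show ?thesis
  proof (cases "l \<le> L")
    case True
    then show ?thesis by (rule below)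
  next
    case False
    then have "L \<le> l" by simp
    then show ?thesis using l
    proof (induction l rule: int_ge_induct)
      case base
      then show ?case using below by simp
    next
      case (step i)
      then obtain a w where a: "is_cluster C (a, i)" "weighted_walk S0 \<delta> p a w" "w \<le> \<alpha> * R powi i"
        by auto
      obtain b w' where b: "is_cluster C (b, i + 1)" "weighted_walk S0 \<delta> a b w'" "w' \<le> R powi (i + 1)"
        using climb_one_level[OF a(1)] step.prems by auto
      have "w + w' \<le> \<alpha> * R powi (i + 1)" using a(3) b(3) \<alpha>_geometric[of i] by linarith
      then show ?case using b(1) weighted_walk_trans[OF a(2) b(2)] by blast
    qed
  qed
qed

lemma separation_dist_pos:
  assumes "separation \<delta> R C" "p \<in> V" "q \<in> V" "p \<noteq> q"
  shows "\<delta> p q > 0"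
proof -
  obtain Lp Lq where "(p, Lp) \<in> C" "(q, Lq) \<in> C" using assms center_has_cluster by blast
  then have "is_cluster C (p, min Lp Lq)" "is_cluster C (q, min Lp Lq)"
    unfolding is_cluster_def by force+
  then have "\<delta> p q > R powi (min Lp Lq)" using assms unfolding separation_def by blast
  moreover have "R powi (min Lp Lq) > 0" using R_gt_1 by simp
  ultimately show ?thesis by linarith
qed

lemma exists_level_below:
  assumes "c > 0"
  shows "\<exists>m \<le> k. R powi m < c"
proof -
  obtain n where n: "(1 / R) ^ n < c" using real_arch_pow_inv[OF assms, of "1 / R"] R_gt_1 by auto
  have "R powi (min (- int n) k) \<le> R powi (- int n)"
    using R_gt_1 by (intro power_int_increasing) auto
  also have "\<dots> = (1 / R) ^ n" by (simp add: power_int_minus power_one_over inverse_eq_divide)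
  finally show ?thesis using n by (intro exI[of _ "min (- int n) k"]) auto
qed

definition linked :: "'a \<Rightarrow> 'a \<Rightarrow> int \<Rightarrow> bool" where
  "linked p q l \<longleftrightarrow> (\<exists>a b wa wb. is_cluster C (a, l) \<and> is_cluster C (b, l) \<and>
     weighted_walk S0 \<delta> p a wa \<and> wa \<le> \<alpha> * R powi l \<and>
     weighted_walk S0 \<delta> q b wb \<and> wb \<le> \<alpha> * R powi l \<and> \<delta> a b \<le> lam * R powi l)"

lemma linked_root_level:
  assumes "p \<in> V" "q \<in> V" "lam \<ge> 0"
  shows "linked p q (snd r)"
proof -
  obtain Lp Lq where "(p, Lp) \<in> C" "(q, Lq) \<in> C" using assms center_has_cluster by blast
  then obtain a wa b wb where
    "is_cluster C (a, snd r)" "weighted_walk S0 \<delta> p a wa" "wa \<le> \<alpha> * R powi snd r"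
    "is_cluster C (b, snd r)" "weighted_walk S0 \<delta> q b wb" "wb \<le> \<alpha> * R powi snd r"
    using ancestor_walk by blast
  moreover from this have "a = b" using is_cluster_root_level by blast
  then have "\<delta> a b \<le> lam * R powi snd r" using dist_self assms(3) R_gt_1 by simp
  ultimately show ?thesis unfolding linked_def by blast
qed

lemma linked_dist_le:
  assumes "linked p q l"
  shows "\<delta> p q \<le> (lam + 2 * \<alpha>) * R powi l"
proof -
  obtain a b wa wb where "\<delta> a b \<le> lam * R powi l" and
    "weighted_walk S0 \<delta> p a wa" "wa \<le> \<alpha> * R powi l" and
    "weighted_walk S0 \<delta> q b wb" "wb \<le> \<alpha> * R powi l"
    using assms unfolding linked_def by blast
  moreover from this have "\<delta> p a \<le> wa" "\<delta> b q \<le> wb"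
    using weighted_walk_S0_dist_le dist_commute[of b q] by auto
  ultimately show ?thesis using dist_via[of p q a b] by (simp add: algebra_simps)
qed

lemma not_linked_dist_gt:
  assumes "p \<in> V" "q \<in> V" "l \<le> snd r" "\<not> linked p q l"
  shows "(lam - 2 * \<alpha>) * R powi l < \<delta> p q"
proof -
  obtain Lp Lq where "(p, Lp) \<in> C" "(q, Lq) \<in> C" using assms center_has_cluster by blast
  then obtain a wa b wb where
    a: "is_cluster C (a, l)" "weighted_walk S0 \<delta> p a wa" "wa \<le> \<alpha> * R powi l" and
    b: "is_cluster C (b, l)" "weighted_walk S0 \<delta> q b wb" "wb \<le> \<alpha> * R powi l"
    using ancestor_walk assms(3) by meson
  then have "\<delta> a b > lam * R powi l" using assms(4) unfolding linked_def by force
  moreover have "\<delta> a b \<le> \<delta> a p + \<delta> p q + \<delta> q b" by (rule dist_via)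
  moreover have "\<delta> p a \<le> wa" "\<delta> q b \<le> wb" using a b weighted_walk_S0_dist_le by blast+
  ultimately show ?thesis using a(3) b(3) dist_commute[of a p] by (simp add: algebra_simps)
qed

lemma linked_sp_dist_le:
  assumes "linked p q l"
  shows "sp_dist \<delta> S0 p q \<le> ereal (\<delta> p q + 4 * \<alpha> * R powi l)"
proof -
  obtain a b wa wb where
    ab: "is_cluster C (a, l)" "is_cluster C (b, l)" "\<delta> a b \<le> lam * R powi l" and
    a: "weighted_walk S0 \<delta> p a wa" "wa \<le> \<alpha> * R powi l" and
    b: "weighted_walk S0 \<delta> q b wb" "wb \<le> \<alpha> * R powi l"
    using assms unfolding linked_def by blast
  have "weighted_walk S0 \<delta> p q (wa + \<delta> a b + wb)"
    using weighted_walk_trans[OF weighted_walk_trans[OF a(1) type_I_walk[OF ab]]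
        weighted_walk_S0_sym[OF b(1)]] .
  moreover have "\<delta> a b \<le> \<delta> a p + \<delta> p q + \<delta> q b" by (rule dist_via)
  moreover have "\<delta> p a \<le> wa" "\<delta> q b \<le> wb" using a b weighted_walk_S0_dist_le by blast+
  ultimately have "sp_dist \<delta> S0 p q \<le> ereal (wa + \<delta> a b + wb)"
    and "wa + \<delta> a b + wb \<le> \<delta> p q + 4 * \<alpha> * R powi l"
    using sp_dist_le_weighted_walk a(2) b(2) dist_commute[of a p] by auto
  then show ?thesis by (meson ereal_less_eq(3) order_trans)
qed

lemma S0_stretch_le:
  assumes sep: "separation \<delta> R C" and p: "p \<in> V" and q: "q \<in> V" and eps: "\<epsilon> > 0"
    and lam: "2 * \<alpha> + 4 * \<alpha> * R / \<epsilon> \<le> lam"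
  shows "sp_dist \<delta> S0 p q \<le> ereal ((1 + \<epsilon>) * \<delta> p q)"
proof (cases "p = q")
  case True
  then show ?thesis using sp_dist_le_weighted_walk[OF weighted_walk_refl] dist_self by simp
next
  case False
  have "4 * \<alpha> * R / \<epsilon> > 0" using \<alpha>_pos R_gt_1 eps by simp
  with lam have lam_gt: "lam - 2 * \<alpha> > 0" by linarith
  have "\<delta> p q / (lam + 2 * \<alpha>) > 0"
    using separation_dist_pos[OF sep p q False] lam_gt \<alpha>_pos by simp
  then obtain m where m: "m \<le> snd r" "R powi m < \<delta> p q / (lam + 2 * \<alpha>)"
    using exists_level_below by blast
  then have "(lam + 2 * \<alpha>) * R powi m < \<delta> p q"
    using lam_gt \<alpha>_pos by (simp add: less_divide_eq mult.commute)
  then have "\<not> linked p q m" using linked_dist_le by (meson not_le)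
  moreover have "linked p q (snd r)" using linked_root_level[OF p q] lam_gt \<alpha>_pos by simp
  ultimately obtain l where l: "l \<le> snd r" "linked p q l" "\<not> linked p q (l - 1)"
    using int_exists_false_true_step[OF m(1)] by blast
  have low: "(lam - 2 * \<alpha>) * R powi (l - 1) < \<delta> p q"
    using not_linked_dist_gt[OF p q _ l(3)] l(1) by simp
  have "4 * \<alpha> * R powi l = (4 * \<alpha> * R) * R powi (l - 1)"
    using power_int_add_1'[of R "l - 1"] R_gt_1 by simp
  also have "\<dots> \<le> (\<epsilon> * (lam - 2 * \<alpha>)) * R powi (l - 1)"
  proof (rule mult_right_mono)
    have "4 * \<alpha> * R / \<epsilon> \<le> lam - 2 * \<alpha>" using lam by linarith
    then show "4 * \<alpha> * R \<le> \<epsilon> * (lam - 2 * \<alpha>)" using eps by (simp add: pos_divide_le_eq mult.commute)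
  qed (use R_gt_1 in simp)
  also have "\<dots> \<le> \<epsilon> * \<delta> p q"
    using low eps by (simp add: mult.assoc)
  finally have "\<delta> p q + 4 * \<alpha> * R powi l \<le> (1 + \<epsilon>) * \<delta> p q" by (simp add: algebra_simps)
  then show ?thesis using linked_sp_dist_le[OF l(2)] by (meson ereal_less_eq(3) order_trans)
qed

end

lemma eucl_dist_triangle: "eucl_dist d x z \<le> eucl_dist d x y + eucl_dist d y z"
  using L2_set_triangle_ineq[of "\<lambda>i. x i - y i" "\<lambda>i. y i - z i" "{..<d}"]
  by (simp add: eucl_dist_def L2_set_def)

lemma eucl_dist_commute: "eucl_dist d x y = eucl_dist d y x"
  unfolding eucl_dist_def by (simp add: power2_commute)

lemma eucl_dist_self: "eucl_dist d x x = 0"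
  unfolding eucl_dist_def by simp

theorem lemma3:
  fixes R :: real
  assumes "R > 1"
  shows "\<exists>lam0 :: real \<Rightarrow> real.
           lam0 \<in> O[at_right 0](\<lambda>\<epsilon>. 1 / \<epsilon>) \<and>
           (\<forall>\<epsilon> > 0. \<forall>lam \<ge> lam0 \<epsilon>. \<forall>(d::nat) (V :: (nat \<Rightarrow> real) set) C r par.
              finite V \<and> V \<noteq> {} \<and> (\<forall>x\<in>V. in_Rd d x) \<and>
              hierarchy (eucl_dist d) R V C r par \<and> separation (eucl_dist d) R C \<longrightarrow>
              (\<forall>p\<in>V. \<forall>q\<in>V. sp_dist (eucl_dist d) (S0_edge (eucl_dist d) R lam C r par) p q
                               \<le> ereal ((1 + \<epsilon>) * eucl_dist d p q)))"
proof (intro exI[of _ "\<lambda>\<epsilon>. 2 * (R / (R - 1)) + 4 * (R / (R - 1)) * R / \<epsilon>"] conjI allI impI ballI)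
  show "(\<lambda>\<epsilon>. 2 * (R / (R - 1)) + 4 * (R / (R - 1)) * R / \<epsilon>) \<in> O[at_right 0](\<lambda>\<epsilon>. 1 / \<epsilon>)"
    by (rule bigo_const_plus_inverse)
next
  fix \<epsilon> lam :: real and d V C r par p q
  assume "\<epsilon> > 0" "2 * (R / (R - 1)) + 4 * (R / (R - 1)) * R / \<epsilon> \<le> lam" "p \<in> V" "q \<in> V"
    and h: "finite V \<and> V \<noteq> {} \<and> (\<forall>x\<in>V. in_Rd d x) \<and> hierarchy (eucl_dist d) R V C r par \<and>
         separation (eucl_dist d) R C"
  interpret metric_hierarchy "eucl_dist d" R lam V C r par
    using h assms eucl_dist_self eucl_dist_commute eucl_dist_triangle by unfold_locales auto
  show "sp_dist (eucl_dist d) (S0_edge (eucl_dist d) R lam C r par) p q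
          \<le> ereal ((1 + \<epsilon>) * eucl_dist d p q)"
    using S0_stretch_le h \<open>\<epsilon> > 0\<close> \<open>p \<in> V\<close> \<open>q \<in> V\<close> \<open>2 * (R / (R - 1)) + _ \<le> lam\<close>
    unfolding \<alpha>_def by blast
qed

end
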